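(* In the setting of the context, let $\omega\in\mathcal{C}$ and put $\kappa:=\frac{\omega^2}{c-id\omega-\omega^2}$, $\lambda:=\omega^2$. Define $\epsilon_0$ as follows. If $\kappa_\Re=0$, $$\epsilon_0:=\sqrt{\min_{\beta\in W(B)}|\beta\kappa_\Im+\lambda_\Im|^2+\min_{\alpha\in W(A)}|\alpha-\lambda_\Re|^2}.$$ If $\kappa_\Re\neq0$, let $\beta_{\inf}$ and $\beta_{\sup}$ be the values in $\overline{W(B)}$ closest to $-\frac{\kappa_\Im\lambda_\Im-\kappa_\Re(\inf W(A)-\lambda_\Re)}{|\kappa|^2}$ and $-\frac{\kappa_\Im\lambda_\Im-\kappa_\Re(\sup W(A)-\lambda_\Re)}{|\kappa|^2}$, respectively, and let $\mathcal{B}:=\left[\frac{\inf W(A)-\lambda_\Re}{\kappa_\Re},\frac{\sup W(A)-\lambda_\Re}{\kappa_\Re}\right]$. If $\mathcal{B}\cap\overline{W(B)}=\emptyset$ set $\Omega':=\{(\inf W(A),\beta_{\inf}),(\sup W(A),\beta_{\sup})\}$; if $\mathcal{B}\cap\overline{W(B)}\neq\emptyset$ set $\Omega':=\{(\inf W(A),\beta_{\inf}),(\sup W(A),\beta_{\sup}),(\alpha_{op},\beta_{op})\}$, where $\beta_{op}$ is the value in $\mathcal{B}\cap\overline{W(B)}$ closest to $-\lambda_\Im/\kappa_\Im$ (arbitrary in $\mathcal{B}\cap\overline{W(B)}$ if $\kappa_\Im=0$) and $\alpha_{op}:=\beta_{op}\kappa_\Re+\lambda_\Re$; then $$\epsilon_0:=\min_{(\alpha,\beta)\in\Omega'}\sqrt{|\beta\kappa_\Im+\lambda_\Im|^2+|\alpha-\kappa_\Re\beta-\lambda_\Re|^2}.$$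 Then $\omega\in W^\epsilon_\Omega(T)$ if and only if $\epsilon>\epsilon_0$.
   Context: Let $\mathcal{H}$ be a Hilbert space, $A$ a selfadjoint (possibly unbounded) operator in $\mathcal{H}$ and $B$ a nonzero bounded selfadjoint operator. Let $c\ge0$, $d>0$, $\delta_\pm:=\pm\sqrt{c-d^2/4}-id/2$ (principal square root), $\mathcal{C}:=\mathbb{C}\setminus\{\delta_+,\delta_-\}$. $W(A),W(B)$ are numerical ranges; for $z\in\mathbb{C}$, $z_\Re,z_\Im$ are real and imaginary parts. For real $\alpha,\beta$ let $t_{(\alpha,\beta)}(\omega):=\alpha-\omega^2-\frac{\omega^2}{c-id\omega-\omega^2}\beta$ and $p_{(\alpha,\beta)}(\omega):=(\alpha-\omega^2)(c-id\omega-\omega^2)-\beta\omega^2$, with roots $r_1,\dots,r_4$ labelled continuously in $(\alpha,\beta)$ and extended by limits to $\overline{\mathbb{R}}\times\mathbb{R}$, values in $\overline{\mathbb{C}}$. $\Omega:=\overline{W(A)}\times\overline{W(B)}$ (closure of $W(A)$ in $\overline{\mathbb{R}}=\mathbb{R}\cup\{\pm\infty\}$), $W_\Omega(T):=\bigcup_n r_n(\Omega)$, and for $\epsilon>0$, $W^\epsilon_\Omega(T):=W_\Omega(T)\cup\{\omega\in\mathcal{C}\setminus W_\Omega(T):\exists(\alpha,\beta)\in\Omega,\ |t_{(\alpha,\beta)}(\omega)|<\epsilon\}$. *)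

theory Defs
  imports "HOL-Analysis.Analysis" "HOL-Library.Extended_Real"
begin

(* The numerical ranges W(A), W(B) are modelled as sets of reals WA, WB. *)

definition delta_p :: "real \<Rightarrow> real \<Rightarrow> complex" where
  "delta_p c d = csqrt (complex_of_real (c - d^2/4)) - \<i> * complex_of_real (d/2)"

definition delta_m :: "real \<Rightarrow> real \<Rightarrow> complex" where
  "delta_m c d = - csqrt (complex_of_real (c - d^2/4)) - \<i> * complex_of_real (d/2)"

definition Cset :: "real \<Rightarrow> real \<Rightarrow> complex set" where
  "Cset c d = UNIV - {delta_p c d, delta_m c d}"

definition tfun :: "real \<Rightarrow> real \<Rightarrow> real \<Rightarrow> real \<Rightarrow> complex \<Rightarrow> complex" where
  "tfun c d \<alpha> \<beta> \<omega> = complex_of_real \<alpha> - \<omega>^2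
     - \<omega>^2 / (complex_of_real c - \<i> * complex_of_real d * \<omega> - \<omega>^2) * complex_of_real \<beta>"

definition pfun :: "real \<Rightarrow> real \<Rightarrow> real \<Rightarrow> real \<Rightarrow> complex \<Rightarrow> complex" where
  "pfun c d \<alpha> \<beta> \<omega> = (complex_of_real \<alpha> - \<omega>^2)
     * (complex_of_real c - \<i> * complex_of_real d * \<omega> - \<omega>^2) - complex_of_real \<beta> * \<omega>^2"

text \<open>Finite (complex) part of W_Omega(T) = union of all roots r_n(Omega), Omega =
  closure of WA in the extended reals times closure of WB.  For finite alpha the
  union over n of r_n(alpha,beta) is the set of roots of p_(alpha,beta); at
  alpha = +-infinity (present iff WA is unbounded above/below) the limit
  roots are delta_+, delta_- and infinity; infinity is not a complex number.\<close>
definition W_Omega :: "real \<Rightarrow> real \<Rightarrow> real set \<Rightarrow> real set \<Rightarrow> complex set" where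
  "W_Omega c d WA WB =
     {\<omega>. \<exists>\<alpha>\<in>closure WA. \<exists>\<beta>\<in>closure WB. pfun c d \<alpha> \<beta> \<omega> = 0}
     \<union> (if bdd_above WA \<and> bdd_below WA then {} else {delta_p c d, delta_m c d})"

definition W_eps :: "real \<Rightarrow> real \<Rightarrow> real set \<Rightarrow> real set \<Rightarrow> real \<Rightarrow> complex set" where
  "W_eps c d WA WB \<epsilon> = W_Omega c d WA WB \<union>
     {\<omega> \<in> Cset c d - W_Omega c d WA WB.
        \<exists>\<alpha>\<in>closure WA. \<exists>\<beta>\<in>closure WB. cmod (tfun c d \<alpha> \<beta> \<omega>) < \<epsilon>}"

definition kap :: "real \<Rightarrow> real \<Rightarrow> complex \<Rightarrow> complex" where
  "kap c d \<omega> = \<omega>^2 / (complex_of_real c - \<i> * complex_of_real d * \<omega> - \<omega>^2)"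

definition nearest :: "real set \<Rightarrow> real \<Rightarrow> real" where
  "nearest S x = (THE y. y \<in> S \<and> (\<forall>z\<in>S. \<bar>y - x\<bar> \<le> \<bar>z - x\<bar>))"

definition nearest_e :: "real set \<Rightarrow> ereal \<Rightarrow> real" where
  "nearest_e S x = (if x = \<infinity> then Sup S else if x = -\<infinity> then Inf S
                    else nearest S (real_of_ereal x))"

definition cost :: "complex \<Rightarrow> complex \<Rightarrow> ereal \<Rightarrow> real \<Rightarrow> ereal" where
  "cost \<kappa> lam a \<beta> = (if a = \<infinity> \<or> a = -\<infinity> then \<infinity>
     else ereal (sqrt ((\<beta> * Im \<kappa> + Im lam)^2 + (real_of_ereal a - Re \<kappa> * \<beta> - Re lam)^2)))"

definition eps0 :: "real \<Rightarrow> real \<Rightarrow> real set \<Rightarrow> real set \<Rightarrow> complex \<Rightarrow> ereal" where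
  "eps0 c d WA WB \<omega> =
    (let \<kappa> = kap c d \<omega>; lam = \<omega>^2;
         a = Inf (ereal ` WA); b = Sup (ereal ` WA); CB = closure WB
     in if Re \<kappa> = 0 then
          ereal (sqrt ((INF \<beta>\<in>WB. \<bar>\<beta> * Im \<kappa> + Im lam\<bar>^2) + (INF \<alpha>\<in>WA. \<bar>\<alpha> - Re lam\<bar>^2)))
        else
          (let tgt = (\<lambda>A. ereal (- (Im \<kappa> * Im lam + Re \<kappa> * Re lam) / (cmod \<kappa>)^2)
                          + ereal (Re \<kappa> / (cmod \<kappa>)^2) * A);
               \<beta>inf = nearest_e CB (tgt a);
               \<beta>sup = nearest_e CB (tgt b);
               e1 = (a - ereal (Re lam)) * ereal (1 / Re \<kappa>);
               e2 = (b - ereal (Re lam)) * ereal (1 / Re \<kappa>);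
               BB = {\<beta>. min e1 e2 \<le> ereal \<beta> \<and> ereal \<beta> \<le> max e1 e2};
               I = BB \<inter> CB;
               \<beta>op = (if Im \<kappa> = 0 then (SOME \<beta>. \<beta> \<in> I) else nearest I (- Im lam / Im \<kappa>));
               \<alpha>op = \<beta>op * Re \<kappa> + Re lam;
               \<Omega>' = (if I = {} then {(a, \<beta>inf), (b, \<beta>sup)}
                      else {(a, \<beta>inf), (b, \<beta>sup), (ereal \<alpha>op, \<beta>op)})
           in Min ((\<lambda>(\<alpha>, \<beta>). cost \<kappa> lam \<alpha> \<beta>) ` \<Omega>')))"

end

theory Submission
  imports Defs
begin

(*
  For \<omega> away from the double points \<delta>+ and \<delta>- the denominator of t does not vanish, so
  t(\<alpha>,\<beta>)(\<omega>) = \<alpha> - \<lambda> - \<kappa>\<beta> and the roots of p are exactly the zeros of t. Hence \<omega> lies in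
  the \<epsilon>-pseudo numerical range iff the distance |\<alpha> - \<lambda> - \<kappa>\<beta>| drops below \<epsilon> somewhere on
  the rectangle closure W(A) \<times> closure W(B), and \<epsilon>0 is the infimum of that distance.
  If Re \<kappa> = 0 the squared distance is a function of \<alpha> plus a function of \<beta>, and the
  infimum separates. Otherwise, for fixed \<beta> the distance is minimised at
  \<alpha> = Re \<kappa> \<beta> + Re \<lambda>: when this point lies in closure W(A) (i.e. \<beta> is in the interval B)
  only |\<beta> Im \<kappa> + Im \<lambda>| remains, which \<beta>_op minimises; otherwise \<alpha> is best taken at the
  nearer endpoint of W(A), where the distance is a quadratic in \<beta> minimised by the point of
  closure W(B) nearest to its vertex. So the infimum is attained on the finite set \<Omega>'.
*)

lemma kap_denominator_nonzero:
  assumes "\<omega> \<in> Cset c d"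
  shows "complex_of_real c - \<i> * complex_of_real d * \<omega> - \<omega>^2 \<noteq> 0"
proof
  assume zero: "complex_of_real c - \<i> * complex_of_real d * \<omega> - \<omega>^2 = 0"
  define s where "s = csqrt (complex_of_real (c - d^2/4))"
  have s2: "s^2 = complex_of_real c - complex_of_real d ^2 / 4"
    unfolding s_def power2_csqrt by simp
  have "(\<omega> - delta_p c d) * (\<omega> - delta_m c d) = \<omega>^2 + \<i> * complex_of_real d * \<omega> - complex_of_real c"
    unfolding delta_p_def delta_m_def s_def[symmetric]
    using s2 by (simp add: algebra_simps power2_eq_square)
  also have "\<dots> = 0" using zero by (simp add: algebra_simps)
  finally have "\<omega> = delta_p c d \<or> \<omega> = delta_m c d" by simp
  then show False using assms unfolding Cset_def by auto
qed

lemma pfun_eq_tfun_mult: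
  assumes "\<omega> \<in> Cset c d"
  shows "pfun c d \<alpha> \<beta> \<omega> = tfun c d \<alpha> \<beta> \<omega> * (complex_of_real c - \<i> * complex_of_real d * \<omega> - \<omega>^2)"
  using kap_denominator_nonzero[OF assms] unfolding pfun_def tfun_def by (simp add: field_simps)

definition resid_sq :: "complex \<Rightarrow> complex \<Rightarrow> real \<Rightarrow> real \<Rightarrow> real" where
  "resid_sq \<kappa> lam \<alpha> \<beta> = (\<beta> * Im \<kappa> + Im lam)^2 + (\<alpha> - Re \<kappa> * \<beta> - Re lam)^2"

lemma cmod_tfun: "cmod (tfun c d \<alpha> \<beta> \<omega>) = sqrt (resid_sq (kap c d \<omega>) (\<omega>^2) \<alpha> \<beta>)"
proof -
  have "tfun c d \<alpha> \<beta> \<omega> = complex_of_real \<alpha> - \<omega>^2 - kap c d \<omega> * complex_of_real \<beta>"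
    unfolding tfun_def kap_def by simp
  moreover have "cmod (complex_of_real \<alpha> - L - K * complex_of_real \<beta>) = sqrt (resid_sq K L \<alpha> \<beta>)" for K L
    unfolding resid_sq_def cmod_def by (simp add: power2_eq_square algebra_simps)
  ultimately show ?thesis by simp
qed

lemma cost_ereal [simp]: "cost \<kappa> lam (ereal \<alpha>) \<beta> = ereal (sqrt (resid_sq \<kappa> lam \<alpha> \<beta>))"
  unfolding cost_def resid_sq_def by simp

lemma W_eps_iff_resid_sq:
  assumes "\<omega> \<in> Cset c d" "\<epsilon> > 0"
  shows "\<omega> \<in> W_eps c d WA WB \<epsilon> \<longleftrightarrow>
    (\<exists>\<alpha>\<in>closure WA. \<exists>\<beta>\<in>closure WB. sqrt (resid_sq (kap c d \<omega>) (\<omega>^2) \<alpha> \<beta>) < \<epsilon>)"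
proof -
  have "\<omega> \<in> W_Omega c d WA WB \<longleftrightarrow>
      (\<exists>\<alpha>\<in>closure WA. \<exists>\<beta>\<in>closure WB. tfun c d \<alpha> \<beta> \<omega> = 0)"
    using assms(1) kap_denominator_nonzero[OF assms(1)]
    unfolding W_Omega_def Cset_def by (auto simp: pfun_eq_tfun_mult[OF assms(1)])
  then show ?thesis
    using assms unfolding W_eps_def by (force simp flip: cmod_tfun)
qed

lemma exists_closure_less_iff:
  fixes h :: "'a::topological_space \<Rightarrow> 'b::topological_space \<Rightarrow> 'c::linorder_topology"
  assumes "continuous_on UNIV (\<lambda>z. h (fst z) (snd z))"
  shows "(\<exists>x\<in>closure S. \<exists>y\<in>closure T. h x y < e) \<longleftrightarrow> (\<exists>x\<in>S. \<exists>y\<in>T. h x y < e)"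
proof -
  have "open {z. h (fst z) (snd z) < e}"
    using assms by (intro open_Collect_less) (auto intro: continuous_intros)
  then have "(\<exists>z\<in>closure (S \<times> T). h (fst z) (snd z) < e) \<longleftrightarrow> (\<exists>z\<in>S \<times> T. h (fst z) (snd z) < e)"
    using open_Int_closure_eq_empty by blast
  then show ?thesis by (simp add: closure_Times)
qed

lemma INF_add_INF_less_iff:
  fixes f :: "'a \<Rightarrow> real" and g :: "'b \<Rightarrow> real"
  assumes "S \<noteq> {}" "T \<noteq> {}" "bdd_below (f ` S)" "bdd_below (g ` T)"
  shows "(INF x\<in>S. f x) + (INF y\<in>T. g y) < e \<longleftrightarrow> (\<exists>x\<in>S. \<exists>y\<in>T. f x + g y < e)"
proof
  assume less: "(INF x\<in>S. f x) + (INF y\<in>T. g y) < e"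
  define \<delta> where "\<delta> = (e - (INF x\<in>S. f x) - (INF y\<in>T. g y)) / 2"
  have "\<delta> > 0" using less unfolding \<delta>_def by simp
  then obtain x y where "x \<in> S" "f x < (INF x\<in>S. f x) + \<delta>" "y \<in> T" "g y < (INF y\<in>T. g y) + \<delta>"
    using cINF_less_iff[OF assms(1,3)] cINF_less_iff[OF assms(2,4)] by (meson less_add_same_cancel1)
  moreover from this have "f x + g y < e" by (simp add: \<delta>_def field_simps)
  ultimately show "\<exists>x\<in>S. \<exists>y\<in>T. f x + g y < e" by blast
next
  assume "\<exists>x\<in>S. \<exists>y\<in>T. f x + g y < e"
  then show "(INF x\<in>S. f x) + (INF y\<in>T. g y) < e"
    using cINF_lower[OF assms(3)] cINF_lower[OF assms(4)] by (meson add_mono order_le_less_trans)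
qed

lemma eps0_less_iff_Re_kap_zero:
  fixes WA WB :: "real set"
  assumes "WA \<noteq> {}" "WB \<noteq> {}" "\<epsilon> > 0" "Re (kap c d \<omega>) = 0"
  shows "ereal \<epsilon> > eps0 c d WA WB \<omega> \<longleftrightarrow>
    (\<exists>\<alpha>\<in>closure WA. \<exists>\<beta>\<in>closure WB. sqrt (resid_sq (kap c d \<omega>) (\<omega>^2) \<alpha> \<beta>) < \<epsilon>)"
proof -
  define \<kappa> where "\<kappa> = kap c d \<omega>"
  define lam where "lam = \<omega>^2"
  define f where "f = (\<lambda>\<alpha>::real. (\<alpha> - Re lam)^2)"
  define g where "g = (\<lambda>\<beta>::real. (\<beta> * Im \<kappa> + Im lam)^2)"
  have resid: "resid_sq \<kappa> lam \<alpha> \<beta> = f \<alpha> + g \<beta>" for \<alpha> \<beta>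
    using assms(4) unfolding resid_sq_def f_def g_def \<kappa>_def by simp
  have sqrt_less: "sqrt x < \<epsilon> \<longleftrightarrow> x < \<epsilon>^2" for x
    using assms(3) by (metis real_sqrt_less_iff real_sqrt_unique less_le)
  have "eps0 c d WA WB \<omega> = ereal (sqrt ((INF \<alpha>\<in>WA. f \<alpha>) + (INF \<beta>\<in>WB. g \<beta>)))"
    using assms(4) unfolding eps0_def f_def g_def \<kappa>_def lam_def Let_def
    by (simp add: add.commute)
  also have "\<dots> < ereal \<epsilon> \<longleftrightarrow> (\<exists>\<alpha>\<in>WA. \<exists>\<beta>\<in>WB. f \<alpha> + g \<beta> < \<epsilon>^2)"
    unfolding less_ereal.simps(1) sqrt_less f_def g_def
    using assms(1,2) by (intro INF_add_INF_less_iff) (auto intro: bdd_belowI[of _ 0])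
  also have "\<dots> \<longleftrightarrow> (\<exists>\<alpha>\<in>closure WA. \<exists>\<beta>\<in>closure WB. f \<alpha> + g \<beta> < \<epsilon>^2)"
    unfolding f_def g_def by (rule exists_closure_less_iff[symmetric]) (intro continuous_intros)
  finally show ?thesis by (simp add: resid sqrt_less flip: \<kappa>_def lam_def)
qed

lemma nearest_is_closest:
  fixes S :: "real set"
  assumes "closed S" "is_interval S" "S \<noteq> {}"
  shows "nearest S x \<in> S \<and> (\<forall>z\<in>S. \<bar>nearest S x - x\<bar> \<le> \<bar>z - x\<bar>)"
proof -
  obtain y where y: "y \<in> S" "\<And>z. z \<in> S \<Longrightarrow> dist x y \<le> dist x z"
    using distance_attains_inf[OF assms(1,3)] by blast
  have closest: "y \<in> S \<and> (\<forall>z\<in>S. \<bar>y - x\<bar> \<le> \<bar>z - x\<bar>)"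
    using y by (simp add: dist_real_def abs_minus_commute)
  have unique: "y' = y" if "y' \<in> S \<and> (\<forall>z\<in>S. \<bar>y' - x\<bar> \<le> \<bar>z - x\<bar>)" for y'
  proof (rule ccontr)
    assume ne: "y' \<noteq> y"
    have "\<bar>y' - x\<bar> \<le> \<bar>y - x\<bar>" "\<bar>y - x\<bar> \<le> \<bar>y' - x\<bar>" using that closest by blast+
    then have mid: "x = (y + y') / 2" using ne by (auto simp: abs_if split: if_splits)
    have "min y y' \<in> S" "max y y' \<in> S" using that closest by (auto simp: min_def max_def)
    moreover have "min y y' \<le> x" "x \<le> max y y'" unfolding mid by auto
    ultimately have "x \<in> S" using assms(2) unfolding is_interval_1 by blast
    then have "\<bar>y - x\<bar> \<le> \<bar>x - x\<bar>" "\<bar>y' - x\<bar> \<le> \<bar>x - x\<bar>" using that closest by blast+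
    then have "y = x" "y' = x" by simp_all
    then show False using ne by simp
  qed
  have "nearest S x = y" unfolding nearest_def using closest unique by (rule the_equality)
  then show ?thesis using closest by simp
qed

lemma nearest_e_mem:
  fixes S :: "real set"
  assumes "closed S" "is_interval S" "S \<noteq> {}" "bounded S"
  shows "nearest_e S x \<in> S"
proof -
  have "Sup S \<in> S" using assms by (intro closed_contains_Sup) (auto intro: bounded_imp_bdd_above)
  moreover have "Inf S \<in> S" using assms by (intro closed_contains_Inf) (auto intro: bounded_imp_bdd_below)
  ultimately show ?thesis unfolding nearest_e_def using nearest_is_closest[OF assms(1-3)] by auto
qed

lemma closed_ereal_interval_vimage: "closed {x::real. lo \<le> ereal x \<and> ereal x \<le> hi}"
proof -
  have "closed ({x. lo \<le> ereal x} \<inter> {x. ereal x \<le> hi})"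
    by (intro closed_Int closed_Collect_le continuous_intros)
  then show ?thesis by (simp add: Collect_conj_eq)
qed

lemma is_interval_ereal_interval_vimage: "is_interval {x::real. lo \<le> ereal x \<and> ereal x \<le> hi}"
proof (unfold is_interval_1, clarify)
  fix a b x :: real
  assume "lo \<le> ereal a" "ereal b \<le> hi" "a \<le> x" "x \<le> b"
  moreover have "ereal a \<le> ereal x" "ereal x \<le> ereal b" using \<open>a \<le> x\<close> \<open>x \<le> b\<close> by simp_all
  ultimately show "lo \<le> ereal x \<and> ereal x \<le> hi" by (meson order_trans)
qed

lemma closure_is_interval_ereal:
  fixes S :: "real set"
  assumes "S \<noteq> {}" "is_interval S"
  shows "closure S = {x. Inf (ereal ` S) \<le> ereal x \<and> ereal x \<le> Sup (ereal ` S)}"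
proof
  show "closure S \<subseteq> {x. Inf (ereal ` S) \<le> ereal x \<and> ereal x \<le> Sup (ereal ` S)}"
    by (intro closure_minimal closed_ereal_interval_vimage) (auto intro: INF_lower SUP_upper)
next
  show "{x. Inf (ereal ` S) \<le> ereal x \<and> ereal x \<le> Sup (ereal ` S)} \<subseteq> closure S"
  proof (clarify, unfold closure_approachable, intro allI impI)
    fix x e :: real
    assume x: "Inf (ereal ` S) \<le> ereal x" "ereal x \<le> Sup (ereal ` S)" and "e > 0"
    moreover have "ereal (x - e) < ereal x" "ereal x < ereal (x + e)" using \<open>e > 0\<close> by auto
    ultimately have "Inf (ereal ` S) < ereal (x + e)" "ereal (x - e) < Sup (ereal ` S)"
      by (meson order.strict_trans1 order.strict_trans2)+
    then obtain w1 w2 where "w1 \<in> S" "w1 < x + e" "w2 \<in> S" "x - e < w2"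
      by (auto simp: Inf_less_iff less_Sup_iff)
    then show "\<exists>y\<in>S. dist y x < e"
    proof (cases "w1 \<le> w2")
      case True
      have "w1 \<le> max w1 (min x w2)" "max w1 (min x w2) \<le> w2" using True by auto
      then have "max w1 (min x w2) \<in> S"
        using assms(2) \<open>w1 \<in> S\<close> \<open>w2 \<in> S\<close> unfolding is_interval_1 by blast
      moreover have "dist (max w1 (min x w2)) x < e"
        using \<open>w1 < x + e\<close> \<open>x - e < w2\<close> \<open>e > 0\<close> by (simp add: dist_real_def)
      ultimately show ?thesis by blast
    next
      case False
      then have "dist w2 x < e" using \<open>w1 < x + e\<close> \<open>x - e < w2\<close> by (simp add: dist_real_def)
      then show ?thesis using \<open>w2 \<in> S\<close> by blast
    qed
  qed
qed

lemma ereal_affine_between_iff: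
  fixes lo hi :: ereal and r l x :: real
  assumes "r \<noteq> 0" "lo \<le> hi"
  defines "e1 \<equiv> (lo - ereal l) * ereal (1 / r)" and "e2 \<equiv> (hi - ereal l) * ereal (1 / r)"
  shows "min e1 e2 \<le> ereal x \<and> ereal x \<le> max e1 e2 \<longleftrightarrow> lo \<le> ereal (r * x + l) \<and> ereal (r * x + l) \<le> hi"
proof (cases "r > 0")
  case True
  have "e1 \<le> ereal x \<longleftrightarrow> lo \<le> ereal (r * x + l)" "ereal x \<le> e2 \<longleftrightarrow> ereal (r * x + l) \<le> hi"
    unfolding e1_def e2_def using True by (cases lo; cases hi; auto simp: field_simps)+
  moreover have "e1 \<le> e2" unfolding e1_def e2_def using True assms(2)
    by (cases lo; cases hi) (auto simp: field_simps)
  ultimately show ?thesis by (simp add: min_def max_def)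
next
  case False
  then have "r < 0" using assms(1) by simp
  then have "ereal x \<le> e1 \<longleftrightarrow> lo \<le> ereal (r * x + l)" "e2 \<le> ereal x \<longleftrightarrow> ereal (r * x + l) \<le> hi"
    unfolding e1_def e2_def by (cases lo; cases hi; auto simp: field_simps)+
  moreover have "e2 \<le> e1" unfolding e1_def e2_def using \<open>r < 0\<close> assms(2)
    by (cases lo; cases hi) (auto simp: field_simps)
  ultimately show ?thesis by (auto simp: min_def max_def)
qed

definition beta_vertex :: "complex \<Rightarrow> complex \<Rightarrow> real \<Rightarrow> real" where
  "beta_vertex \<kappa> lam \<alpha> = (Re \<kappa> * (\<alpha> - Re lam) - Im \<kappa> * Im lam) / (cmod \<kappa>)^2"

lemma resid_sq_vertex_form:
  assumes "\<kappa> \<noteq> 0"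
  shows "resid_sq \<kappa> lam \<alpha> \<beta> =
    (cmod \<kappa>)^2 * (\<beta> - beta_vertex \<kappa> lam \<alpha>)^2 + resid_sq \<kappa> lam \<alpha> (beta_vertex \<kappa> lam \<alpha>)"
proof -
  define v where "v = beta_vertex \<kappa> lam \<alpha>"
  have K: "(cmod \<kappa>)^2 = Re \<kappa>^2 + Im \<kappa>^2" by (simp add: cmod_power2)
  have "(cmod \<kappa>)^2 * v = Re \<kappa> * (\<alpha> - Re lam) - Im \<kappa> * Im lam"
    using assms unfolding v_def beta_vertex_def by simp
  then show ?thesis unfolding v_def[symmetric] resid_sq_def K by algebra
qed

lemma resid_sq_nearest_vertex_le:
  assumes "\<kappa> \<noteq> 0" "closed S" "is_interval S" "\<beta> \<in> S"
  shows "resid_sq \<kappa> lam \<alpha> (nearest S (beta_vertex \<kappa> lam \<alpha>)) \<le> resid_sq \<kappa> lam \<alpha> \<beta>"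
proof -
  have "\<bar>nearest S (beta_vertex \<kappa> lam \<alpha>) - beta_vertex \<kappa> lam \<alpha>\<bar> \<le> \<bar>\<beta> - beta_vertex \<kappa> lam \<alpha>\<bar>"
    using nearest_is_closest[OF assms(2,3)] assms(4) by blast
  then show ?thesis
    by (subst (1 2) resid_sq_vertex_form[OF assms(1)]) (simp add: abs_le_square_iff mult_left_mono)
qed

lemma resid_sq_le_of_closer_alpha:
  assumes "\<bar>\<alpha>' - (Re \<kappa> * \<beta> + Re lam)\<bar> \<le> \<bar>\<alpha> - (Re \<kappa> * \<beta> + Re lam)\<bar>"
  shows "resid_sq \<kappa> lam \<alpha>' \<beta> \<le> resid_sq \<kappa> lam \<alpha> \<beta>"
  using assms unfolding resid_sq_def by (simp add: abs_le_square_iff diff_diff_eq)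

lemma resid_sq_on_line: "resid_sq \<kappa> lam (\<beta> * Re \<kappa> + Re lam) \<beta> = (\<beta> * Im \<kappa> + Im lam)^2"
  unfolding resid_sq_def by (simp add: algebra_simps)

locale Re_kap_nonzero =
  fixes \<kappa> lam :: complex and WA WB :: "real set"
  assumes Re_nonzero: "Re \<kappa> \<noteq> 0"
    and WA: "WA \<noteq> {}" "is_interval WA"
    and WB: "WB \<noteq> {}" "bounded WB" "is_interval WB"
begin

definition infA :: ereal where "infA = Inf (ereal ` WA)"
definition supA :: ereal where "supA = Sup (ereal ` WA)"

definition beta_vertex_e :: "ereal \<Rightarrow> ereal" where
  "beta_vertex_e = (\<lambda>A. ereal (- (Im \<kappa> * Im lam + Re \<kappa> * Re lam) / (cmod \<kappa>)^2)
              + ereal (Re \<kappa> / (cmod \<kappa>)^2) * A)"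

definition \<beta>inf :: real where "\<beta>inf = nearest_e (closure WB) (beta_vertex_e infA)"
definition \<beta>sup :: real where "\<beta>sup = nearest_e (closure WB) (beta_vertex_e supA)"

definition BB :: "real set" where
  "BB = {\<beta>. min ((infA - ereal (Re lam)) * ereal (1 / Re \<kappa>)) ((supA - ereal (Re lam)) * ereal (1 / Re \<kappa>))
              \<le> ereal \<beta> \<and>
            ereal \<beta> \<le> max ((infA - ereal (Re lam)) * ereal (1 / Re \<kappa>)) ((supA - ereal (Re lam)) * ereal (1 / Re \<kappa>))}"

definition \<beta>op :: real where
  "\<beta>op = (if Im \<kappa> = 0 then (SOME \<beta>. \<beta> \<in> BB \<inter> closure WB)
         else nearest (BB \<inter> closure WB) (- Im lam / Im \<kappa>))"

definition \<alpha>op :: real where "\<alpha>op = \<beta>op * Re \<kappa> + Re lam"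

definition candidates :: "(ereal \<times> real) set" where
  "candidates = (if BB \<inter> closure WB = {} then {(infA, \<beta>inf), (supA, \<beta>sup)}
                 else {(infA, \<beta>inf), (supA, \<beta>sup), (ereal \<alpha>op, \<beta>op)})"

lemma eps0_eq_Min_candidates:
  assumes "kap c d \<omega> = \<kappa>" "\<omega>^2 = lam"
  shows "eps0 c d WA WB \<omega> = Min ((\<lambda>(\<alpha>, \<beta>). cost \<kappa> lam \<alpha> \<beta>) ` candidates)"
  using Re_nonzero unfolding eps0_def Let_def assms candidates_def \<alpha>op_def \<beta>op_def BB_def
    \<beta>inf_def \<beta>sup_def beta_vertex_e_def infA_def supA_def
  by simp

lemma mem_closure_WA_iff: "x \<in> closure WA \<longleftrightarrow> infA \<le> ereal x \<and> ereal x \<le> supA"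
  unfolding infA_def supA_def closure_is_interval_ereal[OF WA] by simp

lemma closure_WB: "closed (closure WB)" "is_interval (closure WB)" "closure WB \<noteq> {}" "bounded (closure WB)"
  using WB by (auto simp: is_interval_convex_1 convex_closure bounded_closure)

lemma infA_le_supA: "infA \<le> supA"
  unfolding infA_def supA_def using WA(1) by (simp add: Inf_le_Sup)

lemma mem_BB_iff: "\<beta> \<in> BB \<longleftrightarrow> Re \<kappa> * \<beta> + Re lam \<in> closure WA"
  unfolding BB_def mem_closure_WA_iff using ereal_affine_between_iff[OF Re_nonzero infA_le_supA] by simp

lemma BB_Int_closure_WB: "closed (BB \<inter> closure WB)" "is_interval (BB \<inter> closure WB)"
  unfolding BB_def using closure_WB closed_ereal_interval_vimage is_interval_ereal_interval_vimage
  by (auto intro: closed_Int is_interval_Int)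

lemma \<beta>op_mem:
  assumes "BB \<inter> closure WB \<noteq> {}"
  shows "\<beta>op \<in> BB \<inter> closure WB"
proof (cases "Im \<kappa> = 0")
  case True
  then have "\<beta>op = (SOME \<beta>. \<beta> \<in> BB \<inter> closure WB)" by (simp only: \<beta>op_def simp_thms if_True)
  then show ?thesis using assms some_in_eq by metis
next
  case False
  then show ?thesis unfolding \<beta>op_def using nearest_is_closest[OF BB_Int_closure_WB assms] by simp
qed

lemma beta_vertex_e_ereal: "beta_vertex_e (ereal r) = ereal (beta_vertex \<kappa> lam r)"
proof -
  have "(cmod \<kappa>)^2 \<noteq> 0" using Re_nonzero by auto
  then show ?thesis unfolding beta_vertex_e_def beta_vertex_def by (simp add: field_simps)
qed

lemma candidate_mem:
  assumes "(ereal r, \<beta>) \<in> candidates"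
  shows "r \<in> closure WA" "\<beta> \<in> closure WB"
proof -
  have endpoints: "ereal r \<in> {infA, supA} \<Longrightarrow> r \<in> closure WA"
    unfolding mem_closure_WA_iff using infA_le_supA by auto
  have "\<beta>inf \<in> closure WB" "\<beta>sup \<in> closure WB"
    unfolding \<beta>inf_def \<beta>sup_def using nearest_e_mem[OF closure_WB] by auto
  moreover have "\<beta>op \<in> closure WB \<and> \<alpha>op \<in> closure WA" if "BB \<inter> closure WB \<noteq> {}"
    using \<beta>op_mem[OF that] unfolding \<alpha>op_def by (simp add: mem_BB_iff mult.commute)
  ultimately show "r \<in> closure WA" "\<beta> \<in> closure WB"
    using assms endpoints unfolding candidates_def by (auto split: if_splits)
qed

lemma endpoint_candidate_le:
  assumes "\<beta> \<in> closure WB"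
  shows "cost \<kappa> lam (ereal r) (nearest_e (closure WB) (beta_vertex_e (ereal r))) \<le> ereal (sqrt (resid_sq \<kappa> lam r \<beta>))"
proof -
  have "\<kappa> \<noteq> 0" using Re_nonzero by auto
  then have "resid_sq \<kappa> lam r (nearest (closure WB) (beta_vertex \<kappa> lam r)) \<le> resid_sq \<kappa> lam r \<beta>"
    using closure_WB assms by (intro resid_sq_nearest_vertex_le) auto
  then show ?thesis unfolding beta_vertex_e_ereal nearest_e_def by simp
qed

lemma op_candidate_le:
  assumes "\<beta> \<in> BB \<inter> closure WB"
  shows "resid_sq \<kappa> lam \<alpha>op \<beta>op \<le> resid_sq \<kappa> lam \<alpha> \<beta>"
proof -
  have "(\<beta>op * Im \<kappa> + Im lam)^2 \<le> (\<beta> * Im \<kappa> + Im lam)^2"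
  proof (cases "Im \<kappa> = 0")
    case False
    have closer: "\<bar>nearest (BB \<inter> closure WB) t - t\<bar> \<le> \<bar>\<beta> - t\<bar>" for t
      using nearest_is_closest[OF BB_Int_closure_WB] assms by blast
    have "\<beta>op = nearest (BB \<inter> closure WB) (- Im lam / Im \<kappa>)"
      using False by (simp only: \<beta>op_def if_False)
    then have "\<bar>\<beta>op - (- Im lam / Im \<kappa>)\<bar> \<le> \<bar>\<beta> - (- Im lam / Im \<kappa>)\<bar>"
      using closer[of "- Im lam / Im \<kappa>"] by (simp only:)
    then have "Im \<kappa>^2 * (\<beta>op - (- Im lam / Im \<kappa>))^2 \<le> Im \<kappa>^2 * (\<beta> - (- Im lam / Im \<kappa>))^2"
      by (simp add: abs_le_square_iff mult_left_mono)
    moreover have "Im \<kappa>^2 * (y - (- Im lam / Im \<kappa>))^2 = (y * Im \<kappa> + Im lam)^2" for y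
      using False by (simp add: power2_eq_square field_simps)
    ultimately show ?thesis by simp
  qed simp
  also have "\<dots> \<le> resid_sq \<kappa> lam \<alpha> \<beta>" unfolding resid_sq_def by simp
  finally show ?thesis unfolding \<alpha>op_def resid_sq_on_line .
qed

lemma exists_candidate_le:
  assumes "\<alpha> \<in> closure WA" "\<beta> \<in> closure WB"
  shows "\<exists>(e, \<beta>')\<in>candidates. cost \<kappa> lam e \<beta>' \<le> ereal (sqrt (resid_sq \<kappa> lam \<alpha> \<beta>))"
proof -
  define \<alpha>0 where "\<alpha>0 = Re \<kappa> * \<beta> + Re lam"
  have \<alpha>: "infA \<le> ereal \<alpha>" "ereal \<alpha> \<le> supA" using assms(1) mem_closure_WA_iff by auto
  have sqrt_mono: "resid_sq \<kappa> lam r \<beta> \<le> resid_sq \<kappa> lam \<alpha> \<beta> \<Longrightarrow>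
      ereal (sqrt (resid_sq \<kappa> lam r \<beta>)) \<le> ereal (sqrt (resid_sq \<kappa> lam \<alpha> \<beta>))" for r
    by simp
  consider (inside) "\<alpha>0 \<in> closure WA" | (below) "ereal \<alpha>0 < infA" | (above) "supA < ereal \<alpha>0"
    using mem_closure_WA_iff[of \<alpha>0] by (meson not_le)
  then show ?thesis
  proof cases
    case inside
    then have "\<beta> \<in> BB \<inter> closure WB" using assms(2) mem_BB_iff unfolding \<alpha>0_def by simp
    then have "(ereal \<alpha>op, \<beta>op) \<in> candidates"
      and "cost \<kappa> lam (ereal \<alpha>op) \<beta>op \<le> ereal (sqrt (resid_sq \<kappa> lam \<alpha> \<beta>))"
      using op_candidate_le sqrt_mono unfolding candidates_def by auto
    then show ?thesis by blast
  next
    case below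
    then obtain r where r: "infA = ereal r" using \<alpha>(1) by (cases infA) auto
    then have "\<alpha>0 < r" "r \<le> \<alpha>" using below \<alpha>(1) by auto
    then have "resid_sq \<kappa> lam r \<beta> \<le> resid_sq \<kappa> lam \<alpha> \<beta>"
      by (intro resid_sq_le_of_closer_alpha) (simp add: \<alpha>0_def[symmetric])
    then have "cost \<kappa> lam infA \<beta>inf \<le> ereal (sqrt (resid_sq \<kappa> lam \<alpha> \<beta>))"
      using endpoint_candidate_le[OF assms(2), of r] sqrt_mono unfolding r \<beta>inf_def by (blast intro: order_trans)
    moreover have "(infA, \<beta>inf) \<in> candidates" unfolding candidates_def by simp
    ultimately show ?thesis by blast
  next
    case above
    then obtain r where r: "supA = ereal r" using \<alpha>(2) by (cases supA) auto
    then have "r < \<alpha>0" "\<alpha> \<le> r" using above \<alpha>(2) by auto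
    then have "resid_sq \<kappa> lam r \<beta> \<le> resid_sq \<kappa> lam \<alpha> \<beta>"
      by (intro resid_sq_le_of_closer_alpha) (simp add: \<alpha>0_def[symmetric])
    then have "cost \<kappa> lam supA \<beta>sup \<le> ereal (sqrt (resid_sq \<kappa> lam \<alpha> \<beta>))"
      using endpoint_candidate_le[OF assms(2), of r] sqrt_mono unfolding r \<beta>sup_def by (blast intro: order_trans)
    moreover have "(supA, \<beta>sup) \<in> candidates" unfolding candidates_def by simp
    ultimately show ?thesis by blast
  qed
qed

lemma Min_cost_candidates_less_iff:
  "Min ((\<lambda>(\<alpha>, \<beta>). cost \<kappa> lam \<alpha> \<beta>) ` candidates) < ereal \<epsilon> \<longleftrightarrow>
    (\<exists>\<alpha>\<in>closure WA. \<exists>\<beta>\<in>closure WB. sqrt (resid_sq \<kappa> lam \<alpha> \<beta>) < \<epsilon>)"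
proof -
  have "finite candidates" "candidates \<noteq> {}" unfolding candidates_def by auto
  then have "Min ((\<lambda>(\<alpha>, \<beta>). cost \<kappa> lam \<alpha> \<beta>) ` candidates) < ereal \<epsilon> \<longleftrightarrow>
      (\<exists>(e, \<beta>)\<in>candidates. cost \<kappa> lam e \<beta> < ereal \<epsilon>)"
    by (simp add: Min_less_iff split_def)
  also have "\<dots> \<longleftrightarrow> (\<exists>\<alpha>\<in>closure WA. \<exists>\<beta>\<in>closure WB. sqrt (resid_sq \<kappa> lam \<alpha> \<beta>) < \<epsilon>)"
  proof
    assume "\<exists>(e, \<beta>)\<in>candidates. cost \<kappa> lam e \<beta> < ereal \<epsilon>"
    then obtain e \<beta> where e: "(e, \<beta>) \<in> candidates" "cost \<kappa> lam e \<beta> < ereal \<epsilon>" by blast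
    then obtain r where "e = ereal r" by (cases e) (auto simp: cost_def)
    then have "(ereal r, \<beta>) \<in> candidates" "sqrt (resid_sq \<kappa> lam r \<beta>) < \<epsilon>" using e by auto
    then show "\<exists>\<alpha>\<in>closure WA. \<exists>\<beta>\<in>closure WB. sqrt (resid_sq \<kappa> lam \<alpha> \<beta>) < \<epsilon>"
      using candidate_mem by blast
  next
    assume "\<exists>\<alpha>\<in>closure WA. \<exists>\<beta>\<in>closure WB. sqrt (resid_sq \<kappa> lam \<alpha> \<beta>) < \<epsilon>"
    then obtain \<alpha> \<beta> where "\<alpha> \<in> closure WA" "\<beta> \<in> closure WB" and less: "sqrt (resid_sq \<kappa> lam \<alpha> \<beta>) < \<epsilon>"
      by blast
    then obtain e \<beta>' where "(e, \<beta>') \<in> candidates" "cost \<kappa> lam e \<beta>' \<le> ereal (sqrt (resid_sq \<kappa> lam \<alpha> \<beta>))"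
      using exists_candidate_le by blast
    moreover have "ereal (sqrt (resid_sq \<kappa> lam \<alpha> \<beta>)) < ereal \<epsilon>" using less by simp
    ultimately show "\<exists>(e, \<beta>)\<in>candidates. cost \<kappa> lam e \<beta> < ereal \<epsilon>"
      using order.strict_trans1 by blast
  qed
  finally show ?thesis .
qed

end

theorem proposition4p5:
  fixes c d \<epsilon> :: real and WA WB :: "real set" and \<omega> :: complex
  assumes "c \<ge> 0" and "d > 0" and "\<epsilon> > 0"
    and "WA \<noteq> {}" and "is_interval WA"
    and "WB \<noteq> {}" and "bounded WB" and "is_interval WB" and "WB \<noteq> {0}"
    and "\<omega> \<in> Cset c d"
  shows "\<omega> \<in> W_eps c d WA WB \<epsilon> \<longleftrightarrow> ereal \<epsilon> > eps0 c d WA WB \<omega>"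
proof -
  have "\<omega> \<in> W_eps c d WA WB \<epsilon> \<longleftrightarrow>
      (\<exists>\<alpha>\<in>closure WA. \<exists>\<beta>\<in>closure WB. sqrt (resid_sq (kap c d \<omega>) (\<omega>^2) \<alpha> \<beta>) < \<epsilon>)"
    using assms(10,3) by (rule W_eps_iff_resid_sq)
  also have "\<dots> \<longleftrightarrow> ereal \<epsilon> > eps0 c d WA WB \<omega>"
  proof (cases "Re (kap c d \<omega>) = 0")
    case True
    then show ?thesis using eps0_less_iff_Re_kap_zero[OF assms(4,6,3)] by simp
  next
    case False
    then interpret Re_kap_nonzero "kap c d \<omega>" "\<omega>^2" WA WB
      using assms by unfold_locales
    show ?thesis using eps0_eq_Min_candidates[OF refl refl] Min_cost_candidates_less_iff by simp
  qed
  finally show ?thesis .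
qed

end
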